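(* (Truth lemma) Let $\Phi$ be the closure $cl(\varphi_0)$ of a formula and $M^*$ the canonical model for $\Phi$. For every $w\in W^*$ and every $\varphi\in\Phi$, $M^*,w\vDash\varphi$ iff $\varphi\in w$.
   Context: $\mathcal{L}_{AIL}$: $\varphi::=p\mid\neg\varphi\mid\varphi\wedge\varphi\mid A_i\varphi\mid I_i\varphi\mid E_i\varphi\mid[\approx]_i\varphi\mid[\circ^+]_i\varphi$ (countable atoms $\mathcal{P}$, finite agents $\mathcal{G}$). Hilbert system $\mathbf{AIL}$: axioms — propositional tautologies; $A_i\varphi\leftrightarrow A_i\neg\varphi$; $A_i(\varphi\wedge\psi)\leftrightarrow A_i\varphi\wedge A_i\psi$; $A_i\varphi\leftrightarrow A_iO_j\varphi$ for $O_j\in\{A_j,I_j,[\approx]_j,[\circ^+]_j,E_j\}$; $A_i\varphi\to I_iA_i\varphi$; $\neg A_i\varphi\to I_i\neg A_i\varphi$; $A_ip\wedge p\to[\approx]_ip$; for $\Box\in\{I_i,[\approx]_i\}$: $\Box(\varphi\to\psi)\to(\Box\varphi\to\Box\psi)$, $\Box\varphi\to\varphi$, $\neg\Box\varphi\to\Box\neg\Box\varphi$; $[\circ^+]_i(\varphi\to\psi)\to([\circ^+]_i\varphi\to[\circ^+]_i\psi)$; $[\circ^+]_i\varphi\to\varphi\wedge[\approx]_iI_i[\circ^+]_i\varphi$; $[\circ^+]_i(\varphi\to[\approx]_iI_i\varphi)\to(\varphi\to[\circ^+]_i\varphi)$; $E_i\varphi\leftrightarrow A_i\varphi\wedge[\circ^+]_i\varphi$;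 rules: modus ponens, necessitation for $I_i,[\approx]_i,[\circ^+]_i$. $\Gamma\vdash\varphi$ iff $\vdash\bigwedge\Gamma'\to\varphi$ for some finite $\Gamma'\subseteq\Gamma$. $cl(\varphi_0)$ is the smallest set containing $\varphi_0$ closed under: subformulas; $\neg\psi$ for non-negations $\psi$; $A_i\psi\Rightarrow A_i\chi$ for subformulas $\chi$ of $\psi$; $A_i\psi\Rightarrow I_iA_i\psi,I_i\neg A_i\psi,[\approx]_ip$ for atoms $p$ in $\psi$; $I_i\psi\Rightarrow I_iI_i\psi,I_i\neg I_i\psi$ unless $\psi$ is $I_i\chi$ or $\neg I_i\chi$; analogously for $[\approx]_i$; $[\circ^+]_i\psi\Rightarrow[\approx]_iI_i[\circ^+]_i\psi$; $E_i\psi\Rightarrow A_i\psi,[\circ^+]_i\psi$. The canonical model for $\Phi$: $W^*$ = set of maximal consistent sets in $\Phi$ (subsets $\Gamma\subseteq\Phi$ with $\Gamma\nvdash\bot$ not properly extendable within $\Phi$); $(\Gamma,\Delta)\in\sim_i^*$ iff $\{\psi:I_i\psi\in\Gamma\}\subseteq\Delta$; $(\Gamma,\Delta)\in\approx_i^*$ iff $\{\psi:[\approx]_i\psi\in\Gamma\}\subseteq\Delta$; $V^*(p)=\{\Gamma:p\in\Gamma\}$; $\mathscr{A}_i^*(\Gamma)=\{p:A_ip\in\Gamma\}$. Satisfaction in $M^*$: $p$ iff $w\in V^*(p)$; Boolean usual; $A_i\varphi$ iff every atom occurring in $\varphi$ is in $\mathscr{A}_i^*(w)$; $I_i\varphi$,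 $[\approx]_i\varphi$, $[\circ^+]_i\varphi$ iff $\varphi$ holds at every $v$ with $(w,v)$ in $\sim_i^*$, $\approx_i^*$, $(\sim_i^*\circ\approx_i^* )^+$ respectively, where $\sim_i^*\circ\approx_i^*=\{(w,v):\exists t\,((w,t)\in\approx_i^*,(t,v)\in\sim_i^* )\}$ and $^+$ is transitive closure; $E_i\varphi$ iff $A_i\varphi$ and $[\circ^+]_i\varphi$ hold at $w$. *)

theory Defs
  imports Main "HOL-Library.Countable"
begin

text \<open>Atoms of type 'a (countable), agents of type 'g (finite).
  FA i = A_i (awareness), FI i = I_i, FE i = E_i, FSim i = [approx]_i, FCirc i = [circ^+]_i.\<close>

datatype ('a, 'g) fm =
    FAtom 'a
  | FNeg "('a, 'g) fm"
  | FConj "('a, 'g) fm" "('a, 'g) fm"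
  | FA 'g "('a, 'g) fm"
  | FI 'g "('a, 'g) fm"
  | FE 'g "('a, 'g) fm"
  | FSim 'g "('a, 'g) fm"
  | FCirc 'g "('a, 'g) fm"

abbreviation FImp :: "('a, 'g) fm \<Rightarrow> ('a, 'g) fm \<Rightarrow> ('a, 'g) fm" where
  "FImp \<phi> \<psi> \<equiv> FNeg (FConj \<phi> (FNeg \<psi>))"

abbreviation FIff :: "('a, 'g) fm \<Rightarrow> ('a, 'g) fm \<Rightarrow> ('a, 'g) fm" where
  "FIff \<phi> \<psi> \<equiv> FConj (FImp \<phi> \<psi>) (FImp \<psi> \<phi>)"

definition FBot :: "('a, 'g) fm" where
  "FBot = FConj (FAtom undefined) (FNeg (FAtom undefined))"

definition FTop :: "('a, 'g) fm" where
  "FTop = FNeg FBot"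

primrec atoms :: "('a, 'g) fm \<Rightarrow> 'a set" where
  "atoms (FAtom p) = {p}"
| "atoms (FNeg \<phi>) = atoms \<phi>"
| "atoms (FConj \<phi> \<psi>) = atoms \<phi> \<union> atoms \<psi>"
| "atoms (FA i \<phi>) = atoms \<phi>"
| "atoms (FI i \<phi>) = atoms \<phi>"
| "atoms (FE i \<phi>) = atoms \<phi>"
| "atoms (FSim i \<phi>) = atoms \<phi>"
| "atoms (FCirc i \<phi>) = atoms \<phi>"

primrec subs :: "('a, 'g) fm \<Rightarrow> ('a, 'g) fm set" where
  "subs (FAtom p) = {FAtom p}"
| "subs (FNeg \<phi>) = insert (FNeg \<phi>) (subs \<phi>)"
| "subs (FConj \<phi> \<psi>) = insert (FConj \<phi> \<psi>) (subs \<phi> \<union> subs \<psi>)"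
| "subs (FA i \<phi>) = insert (FA i \<phi>) (subs \<phi>)"
| "subs (FI i \<phi>) = insert (FI i \<phi>) (subs \<phi>)"
| "subs (FE i \<phi>) = insert (FE i \<phi>) (subs \<phi>)"
| "subs (FSim i \<phi>) = insert (FSim i \<phi>) (subs \<phi>)"
| "subs (FCirc i \<phi>) = insert (FCirc i \<phi>) (subs \<phi>)"

text \<open>Propositional evaluation: all non-Boolean formulas are treated as propositional letters.\<close>
primrec peval :: "(('a, 'g) fm \<Rightarrow> bool) \<Rightarrow> ('a, 'g) fm \<Rightarrow> bool" where
  "peval h (FAtom p) = h (FAtom p)"
| "peval h (FNeg \<phi>) = (\<not> peval h \<phi>)"
| "peval h (FConj \<phi> \<psi>) = (peval h \<phi> \<and> peval h \<psi>)"
| "peval h (FA i \<phi>) = h (FA i \<phi>)"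
| "peval h (FI i \<phi>) = h (FI i \<phi>)"
| "peval h (FE i \<phi>) = h (FE i \<phi>)"
| "peval h (FSim i \<phi>) = h (FSim i \<phi>)"
| "peval h (FCirc i \<phi>) = h (FCirc i \<phi>)"

definition tautology :: "('a, 'g) fm \<Rightarrow> bool" where
  "tautology \<phi> \<longleftrightarrow> (\<forall>h. peval h \<phi>)"

inductive AIL :: "('a, 'g) fm \<Rightarrow> bool" where
  Taut: "tautology \<phi> \<Longrightarrow> AIL \<phi>"
| A_neg: "AIL (FIff (FA i \<phi>) (FA i (FNeg \<phi>)))"
| A_conj: "AIL (FIff (FA i (FConj \<phi> \<psi>)) (FConj (FA i \<phi>) (FA i \<psi>)))"
| A_op: "Op \<in> {FA j, FI j, FSim j, FCirc j, FE j} \<Longrightarrow> AIL (FIff (FA i \<phi>) (FA i (Op \<phi>)))"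
| A_intro: "AIL (FImp (FA i \<phi>) (FI i (FA i \<phi>)))"
| NA_intro: "AIL (FImp (FNeg (FA i \<phi>)) (FI i (FNeg (FA i \<phi>))))"
| A_sim: "AIL (FImp (FConj (FA i (FAtom p)) (FAtom p)) (FSim i (FAtom p)))"
| K_box: "B \<in> {FI i, FSim i} \<Longrightarrow> AIL (FImp (B (FImp \<phi> \<psi>)) (FImp (B \<phi>) (B \<psi>)))"
| T_box: "B \<in> {FI i, FSim i} \<Longrightarrow> AIL (FImp (B \<phi>) \<phi>)"
| Five_box: "B \<in> {FI i, FSim i} \<Longrightarrow> AIL (FImp (FNeg (B \<phi>)) (B (FNeg (B \<phi>))))"
| K_circ: "AIL (FImp (FCirc i (FImp \<phi> \<psi>)) (FImp (FCirc i \<phi>) (FCirc i \<psi>)))"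
| Circ_mix: "AIL (FImp (FCirc i \<phi>) (FConj \<phi> (FSim i (FI i (FCirc i \<phi>)))))"
| Circ_ind: "AIL (FImp (FCirc i (FImp \<phi> (FSim i (FI i \<phi>)))) (FImp \<phi> (FCirc i \<phi>)))"
| E_def: "AIL (FIff (FE i \<phi>) (FConj (FA i \<phi>) (FCirc i \<phi>)))"
| MP: "AIL (FImp \<phi> \<psi>) \<Longrightarrow> AIL \<phi> \<Longrightarrow> AIL \<psi>"
| Nec_I: "AIL \<phi> \<Longrightarrow> AIL (FI i \<phi>)"
| Nec_Sim: "AIL \<phi> \<Longrightarrow> AIL (FSim i \<phi>)"
| Nec_Circ: "AIL \<phi> \<Longrightarrow> AIL (FCirc i \<phi>)"

primrec conjs :: "('a, 'g) fm list \<Rightarrow> ('a, 'g) fm" where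
  "conjs [] = FTop"
| "conjs (\<phi> # L) = FConj \<phi> (conjs L)"

definition derives :: "('a, 'g) fm set \<Rightarrow> ('a, 'g) fm \<Rightarrow> bool" where
  "derives \<Gamma> \<phi> \<longleftrightarrow> (\<exists>L. set L \<subseteq> \<Gamma> \<and> AIL (FImp (conjs L) \<phi>))"

definition consistent :: "('a, 'g) fm set \<Rightarrow> bool" where
  "consistent \<Gamma> \<longleftrightarrow> \<not> derives \<Gamma> FBot"

definition mcs_in :: "('a, 'g) fm set \<Rightarrow> ('a, 'g) fm set \<Rightarrow> bool" where
  "mcs_in \<Phi> \<Gamma> \<longleftrightarrow> \<Gamma> \<subseteq> \<Phi> \<and> consistent \<Gamma> \<and>
     (\<forall>\<Delta>. \<Gamma> \<subset> \<Delta> \<and> \<Delta> \<subseteq> \<Phi> \<longrightarrow> \<not> consistent \<Delta>)"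

fun is_neg :: "('a, 'g) fm \<Rightarrow> bool" where
  "is_neg (FNeg _) = True"
| "is_neg _ = False"

inductive_set cl :: "('a, 'g) fm \<Rightarrow> ('a, 'g) fm set" for \<phi>0 :: "('a, 'g) fm" where
  base: "\<phi>0 \<in> cl \<phi>0"
| sub: "\<psi> \<in> cl \<phi>0 \<Longrightarrow> \<chi> \<in> subs \<psi> \<Longrightarrow> \<chi> \<in> cl \<phi>0"
| neg: "\<psi> \<in> cl \<phi>0 \<Longrightarrow> \<not> is_neg \<psi> \<Longrightarrow> FNeg \<psi> \<in> cl \<phi>0"
| A_sub: "FA i \<psi> \<in> cl \<phi>0 \<Longrightarrow> \<chi> \<in> subs \<psi> \<Longrightarrow> FA i \<chi> \<in> cl \<phi>0"
| A_I: "FA i \<psi> \<in> cl \<phi>0 \<Longrightarrow> FI i (FA i \<psi>) \<in> cl \<phi>0"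
| A_INA: "FA i \<psi> \<in> cl \<phi>0 \<Longrightarrow> FI i (FNeg (FA i \<psi>)) \<in> cl \<phi>0"
| A_Sim: "FA i \<psi> \<in> cl \<phi>0 \<Longrightarrow> p \<in> atoms \<psi> \<Longrightarrow> FSim i (FAtom p) \<in> cl \<phi>0"
| I_II: "FI i \<psi> \<in> cl \<phi>0 \<Longrightarrow> \<forall>\<chi>. \<psi> \<noteq> FI i \<chi> \<and> \<psi> \<noteq> FNeg (FI i \<chi>) \<Longrightarrow>
           FI i (FI i \<psi>) \<in> cl \<phi>0"
| I_INI: "FI i \<psi> \<in> cl \<phi>0 \<Longrightarrow> \<forall>\<chi>. \<psi> \<noteq> FI i \<chi> \<and> \<psi> \<noteq> FNeg (FI i \<chi>) \<Longrightarrow>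
           FI i (FNeg (FI i \<psi>)) \<in> cl \<phi>0"
| Sim_SS: "FSim i \<psi> \<in> cl \<phi>0 \<Longrightarrow> \<forall>\<chi>. \<psi> \<noteq> FSim i \<chi> \<and> \<psi> \<noteq> FNeg (FSim i \<chi>) \<Longrightarrow>
           FSim i (FSim i \<psi>) \<in> cl \<phi>0"
| Sim_SNS: "FSim i \<psi> \<in> cl \<phi>0 \<Longrightarrow> \<forall>\<chi>. \<psi> \<noteq> FSim i \<chi> \<and> \<psi> \<noteq> FNeg (FSim i \<chi>) \<Longrightarrow>
           FSim i (FNeg (FSim i \<psi>)) \<in> cl \<phi>0"
| Circ_SIC: "FCirc i \<psi> \<in> cl \<phi>0 \<Longrightarrow> FSim i (FI i (FCirc i \<psi>)) \<in> cl \<phi>0"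
| E_A: "FE i \<psi> \<in> cl \<phi>0 \<Longrightarrow> FA i \<psi> \<in> cl \<phi>0"
| E_Circ: "FE i \<psi> \<in> cl \<phi>0 \<Longrightarrow> FCirc i \<psi> \<in> cl \<phi>0"

record ('a, 'g, 'w) model =
  mW :: "'w set"
  mSim :: "'g \<Rightarrow> ('w \<times> 'w) set"
  mApp :: "'g \<Rightarrow> ('w \<times> 'w) set"
  mV :: "'a \<Rightarrow> 'w set"
  mAw :: "'g \<Rightarrow> 'w \<Rightarrow> 'a set"

primrec sat :: "('a, 'g, 'w) model \<Rightarrow> 'w \<Rightarrow> ('a, 'g) fm \<Rightarrow> bool" where
  "sat M w (FAtom p) = (w \<in> mV M p)"
| "sat M w (FNeg \<phi>) = (\<not> sat M w \<phi>)"
| "sat M w (FConj \<phi> \<psi>) = (sat M w \<phi> \<and> sat M w \<psi>)"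
| "sat M w (FA i \<phi>) = (atoms \<phi> \<subseteq> mAw M i w)"
| "sat M w (FI i \<phi>) = (\<forall>v. (w, v) \<in> mSim M i \<longrightarrow> sat M v \<phi>)"
| "sat M w (FSim i \<phi>) = (\<forall>v. (w, v) \<in> mApp M i \<longrightarrow> sat M v \<phi>)"
| "sat M w (FCirc i \<phi>) = (\<forall>v. (w, v) \<in> (mApp M i O mSim M i)\<^sup>+ \<longrightarrow> sat M v \<phi>)"
| "sat M w (FE i \<phi>) = (atoms \<phi> \<subseteq> mAw M i w \<and>
      (\<forall>v. (w, v) \<in> (mApp M i O mSim M i)\<^sup>+ \<longrightarrow> sat M v \<phi>))"

definition canon :: "('a, 'g) fm set \<Rightarrow> ('a, 'g, ('a, 'g) fm set) model" where
  "canon \<Phi> = \<lparr>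
     mW = {\<Gamma>. mcs_in \<Phi> \<Gamma>},
     mSim = (\<lambda>i. {(\<Gamma>, \<Delta>). mcs_in \<Phi> \<Gamma> \<and> mcs_in \<Phi> \<Delta> \<and> {\<psi>. FI i \<psi> \<in> \<Gamma>} \<subseteq> \<Delta>}),
     mApp = (\<lambda>i. {(\<Gamma>, \<Delta>). mcs_in \<Phi> \<Gamma> \<and> mcs_in \<Phi> \<Delta> \<and> {\<psi>. FSim i \<psi> \<in> \<Gamma>} \<subseteq> \<Delta>}),
     mV = (\<lambda>p. {\<Gamma>. mcs_in \<Phi> \<Gamma> \<and> FAtom p \<in> \<Gamma>}),
     mAw = (\<lambda>i \<Gamma>. {p. FA i (FAtom p) \<in> \<Gamma>})
   \<rparr>"

end

theory Submission
  imports Defs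
begin

(* Atoms, the Boolean connectives and awareness
  are settled by maximality (the A-axioms reduce awareness of a formula to awareness of its atoms).
  For the S5 boxes I_i and [approx]_i the usual existence lemma applies: if B theta is not in Gamma,
  then {psi. B psi in Gamma} together with the negation of theta is consistent and extends to a
  maximal consistent set inside the closure.
  For [circ^+]_i, assume phi belongs to every (approx_i o sim_i)^+-successor of Gamma and let chi be
  the disjunction of the characteristic conjunctions of these finitely many successors (Gamma is
  one of them, the canonical relations being reflexive).  Every
  maximal consistent set consistent with chi is one of them, and they are closed under successors;
  with the existence lemma this yields |- chi --> [approx]_i I_i chi.  The induction axiom turns this
  into |- chi --> [circ^+]_i chi, and chi --> phi is a tautology, so [circ^+]_i phi is in Gamma.
  Everything rests on the closure being finite: its rules add only boundedly many modal prefixes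
  to subformulas of phi0. *)

section \<open>Derivability from sets of premises\<close>

lemma peval_FBot [simp]: "\<not> peval h FBot"
  by (simp add: FBot_def)

lemma peval_FTop [simp]: "peval h FTop"
  by (simp add: FTop_def)

lemma peval_conjs [simp]: "peval h (conjs L) \<longleftrightarrow> (\<forall>\<phi>\<in>set L. peval h \<phi>)"
  by (induction L) auto

lemma AIL_taut_consequence:
  assumes "\<forall>\<psi>\<in>set Ps. AIL \<psi>" and "\<And>h. \<forall>\<psi>\<in>set Ps. peval h \<psi> \<Longrightarrow> peval h \<phi>"
  shows "AIL \<phi>"
  using assms
proof (induction Ps arbitrary: \<phi>)
  case Nil
  then show ?case by (auto intro: AIL.Taut simp: tautology_def)
next
  case (Cons \<psi> Ps)
  have "AIL (FImp \<psi> \<phi>)" using Cons.prems by (intro Cons.IH) auto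
  with Cons.prems(1) show ?case by (auto intro: AIL.MP)
qed

lemma derives_assm: "\<phi> \<in> \<Gamma> \<Longrightarrow> derives \<Gamma> \<phi>"
  unfolding derives_def by (intro exI[of _ "[\<phi>]"] conjI AIL_taut_consequence[of "[]"]) auto

lemma derives_AIL: "AIL \<phi> \<Longrightarrow> derives \<Gamma> \<phi>"
  unfolding derives_def by (intro exI[of _ "[]"] conjI AIL_taut_consequence[of "[\<phi>]"]) auto

lemma derives_mono: "derives \<Gamma> \<phi> \<Longrightarrow> \<Gamma> \<subseteq> \<Delta> \<Longrightarrow> derives \<Delta> \<phi>"
  unfolding derives_def by blast

lemma derives_conjs: "set L \<subseteq> \<Gamma> \<Longrightarrow> derives \<Gamma> (conjs L)"
  unfolding derives_def by (intro exI[of _ L] conjI AIL_taut_consequence[of "[]"]) auto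

lemma derives_MP: "derives \<Gamma> (FImp \<phi> \<psi>) \<Longrightarrow> derives \<Gamma> \<phi> \<Longrightarrow> derives \<Gamma> \<psi>"
proof -
  assume "derives \<Gamma> (FImp \<phi> \<psi>)" "derives \<Gamma> \<phi>"
  then obtain L1 L2 where "set L1 \<subseteq> \<Gamma>" "AIL (FImp (conjs L1) (FImp \<phi> \<psi>))"
    and "set L2 \<subseteq> \<Gamma>" "AIL (FImp (conjs L2) \<phi>)"
    unfolding derives_def by blast
  then show ?thesis
    unfolding derives_def
    by (intro exI[of _ "L1 @ L2"] conjI
        AIL_taut_consequence[of "[FImp (conjs L1) (FImp \<phi> \<psi>), FImp (conjs L2) \<phi>]"]) auto
qed

lemma derives_AIL_imp: "AIL (FImp \<phi> \<psi>) \<Longrightarrow> derives \<Gamma> \<phi> \<Longrightarrow> derives \<Gamma> \<psi>"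
  by (blast intro: derives_MP derives_AIL)

lemma derives_taut_consequence:
  assumes "\<forall>\<psi>\<in>set Ps. derives \<Gamma> \<psi>" and "\<And>h. \<forall>\<psi>\<in>set Ps. peval h \<psi> \<Longrightarrow> peval h \<phi>"
  shows "derives \<Gamma> \<phi>"
  using assms
proof (induction Ps arbitrary: \<phi>)
  case Nil
  then show ?case by (intro derives_AIL AIL.Taut) (simp add: tautology_def)
next
  case (Cons \<psi> Ps)
  have "derives \<Gamma> (FImp \<psi> \<phi>)" using Cons.prems by (intro Cons.IH) auto
  with Cons.prems(1) show ?case by (auto intro: derives_MP)
qed

lemma derives_cut:
  assumes "derives \<Delta> \<phi>" and "\<And>\<psi>. \<psi> \<in> \<Delta> \<Longrightarrow> derives \<Gamma> \<psi>"
  shows "derives \<Gamma> \<phi>"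
proof -
  obtain L where "set L \<subseteq> \<Delta>" and L: "AIL (FImp (conjs L) \<phi>)"
    using assms(1) unfolding derives_def by blast
  then have "derives \<Gamma> (conjs L)"
    using assms(2) by (intro derives_taut_consequence[of L]) auto
  with L show ?thesis by (rule derives_AIL_imp)
qed

lemma derives_deduction: "derives (insert \<phi> \<Gamma>) \<psi> \<Longrightarrow> derives \<Gamma> (FImp \<phi> \<psi>)"
proof -
  assume "derives (insert \<phi> \<Gamma>) \<psi>"
  then obtain L where L: "set L \<subseteq> insert \<phi> \<Gamma>" "AIL (FImp (conjs L) \<psi>)"
    unfolding derives_def by blast
  show ?thesis
    unfolding derives_def
    by (intro exI[of _ "filter (\<lambda>\<chi>. \<chi> \<noteq> \<phi>) L"] conjI
        AIL_taut_consequence[of "[FImp (conjs L) \<psi>]"]) (use L in auto)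
qed

lemma AIL_if_derives_empty: "derives {} \<phi> \<Longrightarrow> AIL \<phi>"
  unfolding derives_def by (auto intro: AIL_taut_consequence[of "[FImp FTop \<phi>]"])

lemma derives_conj_iff: "derives \<Gamma> (FConj \<phi> \<psi>) \<longleftrightarrow> derives \<Gamma> \<phi> \<and> derives \<Gamma> \<psi>"
  by (auto intro: derives_taut_consequence[of "[FConj \<phi> \<psi>]"] derives_taut_consequence[of "[\<phi>, \<psi>]"])

lemma derives_iff_if_AIL_iff:
  assumes "AIL (FIff \<phi> \<psi>)"
  shows "derives \<Gamma> \<phi> \<longleftrightarrow> derives \<Gamma> \<psi>"
proof -
  have "derives \<Gamma> (FIff \<phi> \<psi>)"
    using assms by (rule derives_AIL)
  then show ?thesis
    by (auto intro: derives_taut_consequence[of "[FIff \<phi> \<psi>, \<phi>]"]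
        derives_taut_consequence[of "[FIff \<phi> \<psi>, \<psi>]"])
qed

lemma derives_FA_iff_atoms:
  "derives \<Gamma> (FA i \<phi>) \<longleftrightarrow> (\<forall>p\<in>atoms \<phi>. derives \<Gamma> (FA i (FAtom p)))"
proof (induction \<phi>)
  case (FAtom p)
  then show ?case by simp
next
  case (FNeg \<phi>)
  then show ?case using derives_iff_if_AIL_iff[OF AIL.A_neg[of i \<phi>]] by simp
next
  case (FConj \<phi> \<psi>)
  then show ?case using derives_iff_if_AIL_iff[OF AIL.A_conj[of i \<phi> \<psi>]] derives_conj_iff by auto
next
  case (FA j \<phi>)
  then show ?case using derives_iff_if_AIL_iff[OF AIL.A_op[of "FA j" j i \<phi>]] by simp
next
  case (FI j \<phi>)
  then show ?case using derives_iff_if_AIL_iff[OF AIL.A_op[of "FI j" j i \<phi>]] by simp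
next
  case (FE j \<phi>)
  then show ?case using derives_iff_if_AIL_iff[OF AIL.A_op[of "FE j" j i \<phi>]] by simp
next
  case (FSim j \<phi>)
  then show ?case using derives_iff_if_AIL_iff[OF AIL.A_op[of "FSim j" j i \<phi>]] by simp
next
  case (FCirc j \<phi>)
  then show ?case using derives_iff_if_AIL_iff[OF AIL.A_op[of "FCirc j" j i \<phi>]] by simp
qed

lemma AIL_box_Nec: "B \<in> {FI i, FSim i} \<Longrightarrow> AIL \<phi> \<Longrightarrow> AIL (B \<phi>)"
  by (auto intro: AIL.Nec_I AIL.Nec_Sim)

lemma derives_box:
  assumes B: "B \<in> {FI i, FSim i}" and "derives {\<psi>. B \<psi> \<in> \<Gamma>} \<theta>"
  shows "derives \<Gamma> (B \<theta>)"
proof -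
  obtain L where "set L \<subseteq> {\<psi>. B \<psi> \<in> \<Gamma>}" and "AIL (FImp (conjs L) \<theta>)"
    using assms(2) unfolding derives_def by blast
  then show ?thesis
  proof (induction L arbitrary: \<theta>)
    case Nil
    then have "AIL \<theta>" by (intro AIL_taut_consequence[of "[FImp (conjs []) \<theta>]"]) auto
    then show ?case by (intro derives_AIL AIL_box_Nec[OF B])
  next
    case (Cons \<psi> L)
    then have "AIL (FImp (conjs L) (FImp \<psi> \<theta>))"
      by (intro AIL_taut_consequence[of "[FImp (conjs (\<psi> # L)) \<theta>]"]) auto
    moreover have "set L \<subseteq> {\<psi>. B \<psi> \<in> \<Gamma>}" using Cons.prems(1) by simp
    ultimately have "derives \<Gamma> (B (FImp \<psi> \<theta>))" by (rule Cons.IH[rotated])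
    then have "derives \<Gamma> (FImp (B \<psi>) (B \<theta>))" by (rule derives_AIL_imp[OF AIL.K_box[OF B]])
    moreover have "derives \<Gamma> (B \<psi>)" using Cons.prems(1) by (auto intro: derives_assm)
    ultimately show ?case by (rule derives_MP)
  qed
qed

section \<open>Consistent and maximal consistent sets\<close>

lemma consistent_mono: "consistent \<Delta> \<Longrightarrow> \<Gamma> \<subseteq> \<Delta> \<Longrightarrow> consistent \<Gamma>"
  unfolding consistent_def using derives_mono by blast

lemma inconsistentI: "derives \<Gamma> \<phi> \<Longrightarrow> derives \<Gamma> (FNeg \<phi>) \<Longrightarrow> \<not> consistent \<Gamma>"
  unfolding consistent_def by (auto intro: derives_taut_consequence[of "[\<phi>, FNeg \<phi>]"])

lemma consistent_insert_iff: "consistent (insert \<phi> \<Gamma>) \<longleftrightarrow> \<not> derives \<Gamma> (FNeg \<phi>)"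
proof
  assume "consistent (insert \<phi> \<Gamma>)"
  then show "\<not> derives \<Gamma> (FNeg \<phi>)"
    by (metis derives_assm derives_mono inconsistentI insertI1 subset_insertI)
next
  assume "\<not> derives \<Gamma> (FNeg \<phi>)"
  show "consistent (insert \<phi> \<Gamma>)"
    unfolding consistent_def
  proof
    assume "derives (insert \<phi> \<Gamma>) FBot"
    then have "derives \<Gamma> (FImp \<phi> FBot)" by (rule derives_deduction)
    then have "derives \<Gamma> (FNeg \<phi>)" by (intro derives_taut_consequence[of "[FImp \<phi> FBot]"]) auto
    with \<open>\<not> derives \<Gamma> (FNeg \<phi>)\<close> show False ..
  qed
qed

lemma consistent_insert_FNeg_iff: "consistent (insert (FNeg \<phi>) \<Gamma>) \<longleftrightarrow> \<not> derives \<Gamma> \<phi>"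
  unfolding consistent_insert_iff
  by (auto intro: derives_taut_consequence[of "[FNeg (FNeg \<phi>)]"] derives_taut_consequence[of "[\<phi>]"])

(* Negation that strips a leading FNeg instead of adding a second one; the closure is closed
  under it because the rule cl.neg only applies to non-negations. *)
definition negate :: "('a, 'g) fm \<Rightarrow> ('a, 'g) fm" where
  "negate \<psi> = (case \<psi> of FNeg \<chi> \<Rightarrow> \<chi> | _ \<Rightarrow> FNeg \<psi>)"

lemma peval_negate [simp]: "peval h (negate \<psi>) \<longleftrightarrow> \<not> peval h \<psi>"
  by (cases \<psi>) (auto simp: negate_def)

lemma derives_negate_iff: "derives \<Gamma> (negate \<psi>) \<longleftrightarrow> derives \<Gamma> (FNeg \<psi>)"
  by (auto intro: derives_taut_consequence[of "[FNeg \<psi>]"] derives_taut_consequence[of "[negate \<psi>]"])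

lemma finite_consistent_decision:
  assumes "finite F" and "consistent Z"
  shows "\<exists>D \<subseteq> F \<union> negate ` F. consistent (Z \<union> D) \<and> (\<forall>\<psi>\<in>F. \<psi> \<in> D \<or> negate \<psi> \<in> D)"
  using assms(1)
proof (induction F rule: finite_induct)
  case empty
  then show ?case using assms(2) by auto
next
  case (insert \<psi> F)
  then obtain D where D: "D \<subseteq> F \<union> negate ` F" "consistent (Z \<union> D)"
    "\<forall>\<psi>\<in>F. \<psi> \<in> D \<or> negate \<psi> \<in> D"
    by blast
  show ?case
  proof (cases "consistent (insert \<psi> (Z \<union> D))")
    case True
    then show ?thesis using D by (intro exI[of _ "insert \<psi> D"]) auto
  next
    case False
    then have "derives (Z \<union> D) (FNeg \<psi>)" by (simp add: consistent_insert_iff)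
    moreover have "derives (Z \<union> D) \<psi>" if "derives (Z \<union> D) (FNeg (negate \<psi>))"
      using that by (intro derives_taut_consequence[of "[FNeg (negate \<psi>)]"]) auto
    ultimately have "\<not> derives (Z \<union> D) (FNeg (negate \<psi>))"
      using D(2) inconsistentI by blast
    then have "consistent (insert (negate \<psi>) (Z \<union> D))"
      by (simp add: consistent_insert_iff)
    then show ?thesis using D by (intro exI[of _ "insert (negate \<psi>) D"]) auto
  qed
qed

lemma mcs_in_consistent: "mcs_in \<Phi> \<Gamma> \<Longrightarrow> consistent \<Gamma>"
  unfolding mcs_in_def by blast

lemma mcs_in_subset: "mcs_in \<Phi> \<Gamma> \<Longrightarrow> \<Gamma> \<subseteq> \<Phi>"
  unfolding mcs_in_def by blast

lemma mcs_in_mem_if_consistent_insert: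
  "mcs_in \<Phi> \<Gamma> \<Longrightarrow> \<psi> \<in> \<Phi> \<Longrightarrow> consistent (insert \<psi> \<Gamma>) \<Longrightarrow> \<psi> \<in> \<Gamma>"
  unfolding mcs_in_def by blast

lemma mcs_in_mem_iff_derives: "mcs_in \<Phi> \<Gamma> \<Longrightarrow> \<psi> \<in> \<Phi> \<Longrightarrow> \<psi> \<in> \<Gamma> \<longleftrightarrow> derives \<Gamma> \<psi>"
  by (metis consistent_insert_iff derives_assm inconsistentI mcs_in_consistent
      mcs_in_mem_if_consistent_insert)

lemma mcs_in_Int_subset: "mcs_in \<Phi> \<Delta> \<Longrightarrow> consistent (Z \<union> \<Delta>) \<Longrightarrow> Z \<inter> \<Phi> \<subseteq> \<Delta>"
  by (auto intro: mcs_in_mem_if_consistent_insert elim: consistent_mono)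

lemma mcs_in_eq_if_consistent_Un:
  assumes "mcs_in \<Phi> \<Gamma>" "mcs_in \<Phi> \<Delta>" "consistent (\<Gamma> \<union> \<Delta>)"
  shows "\<Gamma> = \<Delta>"
  using mcs_in_Int_subset[OF assms(1), of \<Delta>] mcs_in_Int_subset[OF assms(2), of \<Gamma>]
    mcs_in_subset[OF assms(1)] mcs_in_subset[OF assms(2)] assms(3)
  by (auto simp: Un_commute)

lemma mcs_in_FNeg_iff:
  "mcs_in \<Phi> \<Gamma> \<Longrightarrow> \<psi> \<in> \<Phi> \<Longrightarrow> FNeg \<psi> \<in> \<Phi> \<Longrightarrow> FNeg \<psi> \<in> \<Gamma> \<longleftrightarrow> \<psi> \<notin> \<Gamma>"
  by (metis consistent_insert_iff derives_assm inconsistentI mcs_in_consistent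
      mcs_in_mem_if_consistent_insert mcs_in_mem_iff_derives)

lemma mcs_in_FConj_iff:
  assumes \<Gamma>: "mcs_in \<Phi> \<Gamma>" and "FConj \<phi> \<psi> \<in> \<Phi>" "\<phi> \<in> \<Phi>" "\<psi> \<in> \<Phi>"
  shows "FConj \<phi> \<psi> \<in> \<Gamma> \<longleftrightarrow> \<phi> \<in> \<Gamma> \<and> \<psi> \<in> \<Gamma>"
  using assms mcs_in_mem_iff_derives[OF \<Gamma>] derives_conj_iff by metis

lemma mcs_in_FA_iff:
  assumes \<Gamma>: "mcs_in \<Phi> \<Gamma>" and "FA i \<phi> \<in> \<Phi>" and "\<And>p. p \<in> atoms \<phi> \<Longrightarrow> FA i (FAtom p) \<in> \<Phi>"
  shows "FA i \<phi> \<in> \<Gamma> \<longleftrightarrow> atoms \<phi> \<subseteq> {p. FA i (FAtom p) \<in> \<Gamma>}"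
proof -
  have "\<forall>p\<in>atoms \<phi>. FA i (FAtom p) \<in> \<Gamma> \<longleftrightarrow> derives \<Gamma> (FA i (FAtom p))"
    using assms(3) mcs_in_mem_iff_derives[OF \<Gamma>] by blast
  with mcs_in_mem_iff_derives[OF \<Gamma> assms(2)] derives_FA_iff_atoms[of \<Gamma> i \<phi>] show ?thesis
    by auto
qed

lemma mcs_in_FE_iff:
  assumes \<Gamma>: "mcs_in \<Phi> \<Gamma>" and "FE i \<phi> \<in> \<Phi>" "FA i \<phi> \<in> \<Phi>" "FCirc i \<phi> \<in> \<Phi>"
  shows "FE i \<phi> \<in> \<Gamma> \<longleftrightarrow> FA i \<phi> \<in> \<Gamma> \<and> FCirc i \<phi> \<in> \<Gamma>"
  using assms mcs_in_mem_iff_derives[OF \<Gamma>] derives_conj_iff derives_iff_if_AIL_iff[OF AIL.E_def]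
  by metis

section \<open>Finiteness of the closure\<close>

lemma subs_refl [simp]: "\<phi> \<in> subs \<phi>"
  by (cases \<phi>) auto

lemma subs_trans: "\<chi> \<in> subs \<psi> \<Longrightarrow> \<theta> \<in> subs \<chi> \<Longrightarrow> \<theta> \<in> subs \<psi>"
  by (induction \<psi>) auto

lemma finite_subs [simp]: "finite (subs \<phi>)"
  by (induction \<phi>) auto

lemma finite_atoms [simp]: "finite (atoms \<phi>)"
  by (induction \<phi>) auto

lemma FAtom_mem_subs: "p \<in> atoms \<phi> \<Longrightarrow> FAtom p \<in> subs \<phi>"
  by (induction \<phi>) auto

lemma atoms_subset_if_mem_subs: "\<chi> \<in> subs \<psi> \<Longrightarrow> atoms \<chi> \<subseteq> atoms \<psi>"
  by (induction \<psi>) auto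

definition subs_closed :: "('a, 'g) fm set \<Rightarrow> bool" where
  "subs_closed S \<longleftrightarrow> (\<forall>\<psi>\<in>S. subs \<psi> \<subseteq> S)"

(* An explicit finite superset cl_bound of cl phi0, in three layers: the formulas the closure
  rules build directly from subformulas of phi0, then one application of the I_II/I_INI/Sim_SS/
  Sim_SNS rules to boxes of that layer (their side conditions forbid a second one), then negations. *)
definition cl_core :: "('a, 'g) fm \<Rightarrow> ('a, 'g) fm set" where
  "cl_core \<phi>0 = subs \<phi>0
    \<union> (\<Union>i. \<Union>\<chi>\<in>subs \<phi>0. {FA i \<chi>, FNeg (FA i \<chi>), FI i (FA i \<chi>), FI i (FNeg (FA i \<chi>)),
                         FCirc i \<chi>, FI i (FCirc i \<chi>), FSim i (FI i (FCirc i \<chi>))})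
    \<union> (\<Union>i. (\<lambda>p. FSim i (FAtom p)) ` atoms \<phi>0)"

definition box_ext :: "(('a, 'g) fm \<Rightarrow> ('a, 'g) fm) \<Rightarrow> ('a, 'g) fm set \<Rightarrow> ('a, 'g) fm set" where
  "box_ext B S = (\<Union>\<theta>\<in>B -` S. {B (B \<theta>), FNeg (B \<theta>), B (FNeg (B \<theta>))})"

definition cl_box :: "('a, 'g) fm \<Rightarrow> ('a, 'g) fm set" where
  "cl_box \<phi>0 = cl_core \<phi>0 \<union> (\<Union>i. box_ext (FI i) (cl_core \<phi>0) \<union> box_ext (FSim i) (cl_core \<phi>0))"

definition cl_bound :: "('a, 'g) fm \<Rightarrow> ('a, 'g) fm set" where
  "cl_bound \<phi>0 = cl_box \<phi>0 \<union> FNeg ` cl_box \<phi>0"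

lemma subs_closed_cl_core: "subs_closed (cl_core \<phi>0)"
  unfolding subs_closed_def cl_core_def
  by (fastforce simp: image_iff intro: subs_trans FAtom_mem_subs)

lemma subs_box_ext:
  assumes "B \<in> {FI i, FSim i}" and "subs_closed S" and "\<psi> \<in> box_ext B S"
  shows "subs \<psi> \<subseteq> box_ext B S \<union> S"
  using assms unfolding subs_closed_def box_ext_def by (fastforce simp: image_iff)

lemma subs_closed_cl_box: "subs_closed (cl_box \<phi>0)"
  using subs_closed_cl_core[of \<phi>0]
    subs_box_ext[of "FI _" _ "cl_core \<phi>0"] subs_box_ext[of "FSim _" _ "cl_core \<phi>0"]
  unfolding subs_closed_def cl_box_def by fast

lemma subs_closed_cl_bound: "subs_closed (cl_bound \<phi>0)"
  using subs_closed_cl_box[of \<phi>0] unfolding subs_closed_def cl_bound_def by fastforce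

lemma finite_box_ext: "inj B \<Longrightarrow> finite S \<Longrightarrow> finite (box_ext B S)"
  unfolding box_ext_def by (auto intro: finite_vimageI)

lemma finite_cl_bound: "finite (cl_bound (\<phi>0 :: ('a, 'g::finite) fm))"
proof -
  have "finite (cl_core \<phi>0)" unfolding cl_core_def by auto
  then have "finite (cl_box \<phi>0)"
    unfolding cl_box_def by (auto intro!: finite_box_ext simp: inj_def)
  then show ?thesis unfolding cl_bound_def by blast
qed

lemma cl_core_subset_cl_bound: "cl_core \<phi>0 \<subseteq> cl_bound \<phi>0"
  unfolding cl_bound_def cl_box_def by blast

lemma cl_bound_nonneg: "\<psi> \<in> cl_bound \<phi>0 \<Longrightarrow> \<not> is_neg \<psi> \<Longrightarrow> \<psi> \<in> cl_box \<phi>0"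
  unfolding cl_bound_def by auto

lemma arg_mem_subs_if_FA_FCirc_FE:
  assumes "Op \<in> {FA i, FCirc i, FE i}" and "Op \<psi> \<in> cl_bound \<phi>0"
  shows "\<psi> \<in> subs \<phi>0"
proof -
  have "Op \<psi> \<in> cl_core \<phi>0"
    using assms cl_bound_nonneg[OF assms(2)] unfolding cl_box_def box_ext_def by auto
  then show ?thesis
    using assms(1) subs_trans[of "Op \<psi>" \<phi>0 \<psi>] unfolding cl_core_def by auto
qed

lemma cl_core_forms_mem_cl_bound:
  assumes "\<chi> \<in> subs \<phi>0"
  shows "FA i \<chi> \<in> cl_bound \<phi>0" and "FI i (FA i \<chi>) \<in> cl_bound \<phi>0"
    and "FI i (FNeg (FA i \<chi>)) \<in> cl_bound \<phi>0" and "FCirc i \<chi> \<in> cl_bound \<phi>0"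
    and "FSim i (FI i (FCirc i \<chi>)) \<in> cl_bound \<phi>0"
  using assms unfolding cl_bound_def cl_box_def cl_core_def by blast+

lemma box_ext_forms_mem_cl_bound:
  assumes "B \<in> {FI i, FSim i}" and "B \<psi> \<in> cl_bound \<phi>0" and "\<forall>\<chi>. \<psi> \<noteq> B \<chi> \<and> \<psi> \<noteq> FNeg (B \<chi>)"
  shows "B (B \<psi>) \<in> cl_bound \<phi>0" and "B (FNeg (B \<psi>)) \<in> cl_bound \<phi>0"
proof -
  have "B \<psi> \<in> cl_core \<phi>0"
    using assms cl_bound_nonneg[OF assms(2)] unfolding cl_box_def box_ext_def by auto
  with assms(1) show "B (B \<psi>) \<in> cl_bound \<phi>0" and "B (FNeg (B \<psi>)) \<in> cl_bound \<phi>0"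
    unfolding cl_bound_def cl_box_def box_ext_def by blast+
qed

lemma cl_subset_cl_bound: "cl \<phi>0 \<subseteq> cl_bound \<phi>0"
proof
  fix \<psi> assume "\<psi> \<in> cl \<phi>0"
  then show "\<psi> \<in> cl_bound \<phi>0"
  proof (induction rule: cl.induct)
    case base
    then show ?case by (simp add: cl_bound_def cl_box_def cl_core_def)
  next
    case (sub \<psi> \<chi>)
    then show ?case using subs_closed_cl_bound unfolding subs_closed_def by blast
  next
    case (neg \<psi>)
    then show ?case using cl_bound_nonneg by (auto simp: cl_bound_def)
  next
    case (A_sub i \<psi> \<chi>)
    then have "\<psi> \<in> subs \<phi>0" by (intro arg_mem_subs_if_FA_FCirc_FE[of "FA i" i]) simp_all
    then show ?case by (rule cl_core_forms_mem_cl_bound(1)[OF subs_trans[OF _ A_sub(2)]])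
  next
    case (A_I i \<psi>)
    then show ?case
      by (intro cl_core_forms_mem_cl_bound(2) arg_mem_subs_if_FA_FCirc_FE[of "FA i" i]) simp_all
  next
    case (A_INA i \<psi>)
    then show ?case
      by (intro cl_core_forms_mem_cl_bound(3) arg_mem_subs_if_FA_FCirc_FE[of "FA i" i]) simp_all
  next
    case (A_Sim i \<psi> p)
    then have "\<psi> \<in> subs \<phi>0" by (intro arg_mem_subs_if_FA_FCirc_FE[of "FA i" i]) simp_all
    with A_Sim(2) have "p \<in> atoms \<phi>0" using atoms_subset_if_mem_subs by blast
    then have "FSim i (FAtom p) \<in> cl_core \<phi>0" unfolding cl_core_def by blast
    then show ?case using cl_core_subset_cl_bound by blast
  next
    case (I_II i \<psi>)
    then show ?case by (intro box_ext_forms_mem_cl_bound(1)[of "FI i" i]) auto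
  next
    case (I_INI i \<psi>)
    then show ?case by (intro box_ext_forms_mem_cl_bound(2)[of "FI i" i]) auto
  next
    case (Sim_SS i \<psi>)
    then show ?case by (intro box_ext_forms_mem_cl_bound(1)[of "FSim i" i]) auto
  next
    case (Sim_SNS i \<psi>)
    then show ?case by (intro box_ext_forms_mem_cl_bound(2)[of "FSim i" i]) auto
  next
    case (Circ_SIC i \<psi>)
    then show ?case
      by (intro cl_core_forms_mem_cl_bound(5) arg_mem_subs_if_FA_FCirc_FE[of "FCirc i" i]) simp_all
  next
    case (E_A i \<psi>)
    then show ?case
      by (intro cl_core_forms_mem_cl_bound(1) arg_mem_subs_if_FA_FCirc_FE[of "FE i" i]) simp_all
  next
    case (E_Circ i \<psi>)
    then show ?case
      by (intro cl_core_forms_mem_cl_bound(4) arg_mem_subs_if_FA_FCirc_FE[of "FE i" i]) simp_all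
  qed
qed

lemma finite_cl: "finite (cl (\<phi>0 :: ('a, 'g::finite) fm))"
  using finite_cl_bound cl_subset_cl_bound by (rule finite_subset[rotated])

lemma negate_mem_cl: "\<psi> \<in> cl \<phi>0 \<Longrightarrow> negate \<psi> \<in> cl \<phi>0"
  by (cases \<psi>) (auto simp: negate_def intro: cl.neg cl.sub)

section \<open>The canonical relations\<close>

definition canon_rel ::
  "('a, 'g) fm set \<Rightarrow> (('a, 'g) fm \<Rightarrow> ('a, 'g) fm) \<Rightarrow> (('a, 'g) fm set \<times> ('a, 'g) fm set) set"
  where "canon_rel \<Phi> B = {(\<Gamma>, \<Delta>). mcs_in \<Phi> \<Gamma> \<and> mcs_in \<Phi> \<Delta> \<and> {\<psi>. B \<psi> \<in> \<Gamma>} \<subseteq> \<Delta>}"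

lemma canon_simps:
  "mW (canon \<Phi>) = {\<Gamma>. mcs_in \<Phi> \<Gamma>}"
  "mSim (canon \<Phi>) i = canon_rel \<Phi> (FI i)"
  "mApp (canon \<Phi>) i = canon_rel \<Phi> (FSim i)"
  "mV (canon \<Phi>) p = {\<Gamma>. mcs_in \<Phi> \<Gamma> \<and> FAtom p \<in> \<Gamma>}"
  "mAw (canon \<Phi>) i \<Gamma> = {p. FA i (FAtom p) \<in> \<Gamma>}"
  by (simp_all add: canon_def canon_rel_def)

lemma mcs_in_if_trancl_canon_rel: "(\<Gamma>, \<Delta>) \<in> (canon_rel \<Phi> B O canon_rel \<Phi> B')\<^sup>+ \<Longrightarrow> mcs_in \<Phi> \<Delta>"
  by (erule tranclE) (auto simp: canon_rel_def)

locale finite_closure_set =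
  fixes \<Phi> :: "('a, 'g) fm set"
  assumes finite_closure: "finite \<Phi>"
    and negate_mem: "\<psi> \<in> \<Phi> \<Longrightarrow> negate \<psi> \<in> \<Phi>"
    and subs_mem: "\<psi> \<in> \<Phi> \<Longrightarrow> \<chi> \<in> subs \<psi> \<Longrightarrow> \<chi> \<in> \<Phi>"
begin

lemma Lindenbaum:
  assumes "consistent Z"
  shows "\<exists>\<Delta>. mcs_in \<Phi> \<Delta> \<and> consistent (Z \<union> \<Delta>)"
proof -
  obtain D where D: "D \<subseteq> \<Phi> \<union> negate ` \<Phi>" "consistent (Z \<union> D)" "\<forall>\<psi>\<in>\<Phi>. \<psi> \<in> D \<or> negate \<psi> \<in> D"
    using finite_consistent_decision[OF finite_closure assms] by blast
  have "mcs_in \<Phi> D"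
    unfolding mcs_in_def
  proof (intro conjI allI impI)
    show "D \<subseteq> \<Phi>" using D(1) negate_mem by blast
    show "consistent D" using D(2) consistent_mono by blast
  next
    fix \<Delta> assume \<Delta>: "D \<subset> \<Delta> \<and> \<Delta> \<subseteq> \<Phi>"
    then obtain \<psi> where "\<psi> \<in> \<Delta>" "\<psi> \<notin> D" by blast
    with D(3) \<Delta> have "negate \<psi> \<in> \<Delta>" by blast
    with \<open>\<psi> \<in> \<Delta>\<close> show "\<not> consistent \<Delta>"
      using inconsistentI[of \<Delta> \<psi>] derives_negate_iff[of \<Delta> \<psi>] derives_assm[of _ \<Delta>] by blast
  qed
  with D(2) show ?thesis by blast
qed

lemma finite_mcs: "mcs_in \<Phi> \<Gamma> \<Longrightarrow> finite \<Gamma>"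
  using finite_closure finite_subset mcs_in_subset by blast

lemma finite_mcs_set: "finite {\<Gamma>. mcs_in \<Phi> \<Gamma>}"
proof (rule finite_subset)
  show "{\<Gamma>. mcs_in \<Phi> \<Gamma>} \<subseteq> Pow \<Phi>" by (auto dest: mcs_in_subset)
qed (simp add: finite_closure)

lemma mem_if_box_mem: "B \<in> {FI i, FSim i} \<Longrightarrow> B \<psi> \<in> \<Phi> \<Longrightarrow> \<psi> \<in> \<Phi>"
  using subs_mem[of "B \<psi>" \<psi>] by auto

lemma canon_rel_witness:
  assumes B: "B \<in> {FI i, FSim i}" and \<Gamma>: "mcs_in \<Phi> \<Gamma>" and "\<not> derives \<Gamma> (B \<theta>)"
  shows "\<exists>\<Delta>. (\<Gamma>, \<Delta>) \<in> canon_rel \<Phi> B \<and> \<not> derives \<Delta> \<theta>"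
proof -
  let ?S = "{\<psi>. B \<psi> \<in> \<Gamma>}"
  have "\<not> derives ?S \<theta>" using assms(3) derives_box[OF B] by blast
  then have "consistent (insert (FNeg \<theta>) ?S)" by (simp add: consistent_insert_FNeg_iff)
  then obtain \<Delta> where \<Delta>: "mcs_in \<Phi> \<Delta>" "consistent (insert (FNeg \<theta>) ?S \<union> \<Delta>)"
    using Lindenbaum by blast
  have "?S \<subseteq> \<Phi>" using mem_if_box_mem[OF B] mcs_in_subset[OF \<Gamma>] by blast
  then have "?S \<subseteq> \<Delta>" using mcs_in_Int_subset[OF \<Delta>] by blast
  moreover have "\<not> derives \<Delta> \<theta>"
    using \<Delta>(2) consistent_mono[of _ "insert (FNeg \<theta>) \<Delta>"] consistent_insert_FNeg_iff by blast
  ultimately show ?thesis using \<Gamma> \<Delta>(1) by (auto simp: canon_rel_def)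
qed

lemma mcs_in_box_iff:
  assumes B: "B \<in> {FI i, FSim i}" and \<Gamma>: "mcs_in \<Phi> \<Gamma>" and "B \<phi> \<in> \<Phi>"
  shows "B \<phi> \<in> \<Gamma> \<longleftrightarrow> (\<forall>\<Delta>. (\<Gamma>, \<Delta>) \<in> canon_rel \<Phi> B \<longrightarrow> \<phi> \<in> \<Delta>)"
proof
  show "\<forall>\<Delta>. (\<Gamma>, \<Delta>) \<in> canon_rel \<Phi> B \<longrightarrow> \<phi> \<in> \<Delta>" if "B \<phi> \<in> \<Gamma>"
    using that by (auto simp: canon_rel_def)
  show "B \<phi> \<in> \<Gamma>" if "\<forall>\<Delta>. (\<Gamma>, \<Delta>) \<in> canon_rel \<Phi> B \<longrightarrow> \<phi> \<in> \<Delta>"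
    using that canon_rel_witness[OF B \<Gamma>, of \<phi>] mcs_in_mem_iff_derives[OF \<Gamma> assms(3)]
      derives_assm by blast
qed

lemma canon_rel_refl:
  assumes B: "B \<in> {FI i, FSim i}" and \<Gamma>: "mcs_in \<Phi> \<Gamma>"
  shows "(\<Gamma>, \<Gamma>) \<in> canon_rel \<Phi> B"
proof -
  have "\<psi> \<in> \<Gamma>" if "B \<psi> \<in> \<Gamma>" for \<psi>
  proof -
    have "\<psi> \<in> \<Phi>" using that mem_if_box_mem[OF B] mcs_in_subset[OF \<Gamma>] by blast
    moreover have "derives \<Gamma> \<psi>"
      using that B by (intro derives_AIL_imp[OF AIL.T_box derives_assm]) auto
    ultimately show ?thesis using mcs_in_mem_iff_derives[OF \<Gamma>] by blast
  qed
  with \<Gamma> show ?thesis by (auto simp: canon_rel_def)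
qed

end

section \<open>Characteristic formulas and the induction axiom\<close>

(* SOME picks an enumeration of S; big_conj S is only meaningful for finite S. *)
definition big_conj :: "('a, 'g) fm set \<Rightarrow> ('a, 'g) fm" where
  "big_conj S = conjs (SOME L. set L = S)"

definition big_disj :: "('a, 'g) fm set \<Rightarrow> ('a, 'g) fm" where
  "big_disj S = FNeg (big_conj (FNeg ` S))"

lemma set_SOME_list: "finite S \<Longrightarrow> set (SOME L. set L = S) = S"
  by (metis (mono_tags) finite_list someI_ex)

lemma peval_big_conj: "finite S \<Longrightarrow> peval h (big_conj S) \<longleftrightarrow> (\<forall>\<phi>\<in>S. peval h \<phi>)"
  by (simp add: big_conj_def set_SOME_list)

lemma peval_big_disj: "finite S \<Longrightarrow> peval h (big_disj S) \<longleftrightarrow> (\<exists>\<phi>\<in>S. peval h \<phi>)"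
  by (simp add: big_disj_def peval_big_conj)

lemma derives_big_conj_iff: "finite S \<Longrightarrow> derives \<Gamma> (big_conj S) \<longleftrightarrow> (\<forall>\<phi>\<in>S. derives \<Gamma> \<phi>)"
proof
  assume "finite S" "\<forall>\<phi>\<in>S. derives \<Gamma> \<phi>"
  moreover have "derives S (big_conj S)"
    using \<open>finite S\<close> by (simp add: big_conj_def set_SOME_list derives_conjs)
  ultimately show "derives \<Gamma> (big_conj S)" by (blast intro: derives_cut)
qed (auto intro: derives_taut_consequence[of "[big_conj S]"] simp: peval_big_conj)

lemma derives_Circ_mix:
  assumes "FCirc i \<phi> \<in> \<Gamma>"
  shows "derives \<Gamma> \<phi>" and "derives \<Gamma> (FSim i (FI i (FCirc i \<phi>)))"
proof -
  have "derives \<Gamma> (FConj \<phi> (FSim i (FI i (FCirc i \<phi>))))"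
    using assms by (intro derives_AIL_imp[OF AIL.Circ_mix derives_assm])
  then show "derives \<Gamma> \<phi>" and "derives \<Gamma> (FSim i (FI i (FCirc i \<phi>)))"
    by (simp_all add: derives_conj_iff)
qed

context finite_closure_set
begin

lemma derives_big_disj_big_conj:
  assumes "X \<subseteq> {\<Gamma>. mcs_in \<Phi> \<Gamma>}" and "\<Gamma> \<in> X"
  shows "derives \<Gamma> (big_disj (big_conj ` X))"
proof -
  have "finite X" using assms(1) finite_mcs_set finite_subset by blast
  have "finite \<Gamma>" using assms finite_mcs by blast
  then have "derives \<Gamma> (big_conj \<Gamma>)" by (simp add: derives_big_conj_iff derives_assm)
  then show ?thesis
    using \<open>finite X\<close> \<open>finite \<Gamma>\<close> \<open>\<Gamma> \<in> X\<close>
    by (intro derives_taut_consequence[of "[big_conj \<Gamma>]"]) (auto simp: peval_big_disj)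
qed

lemma mem_if_consistent_big_disj:
  assumes X: "X \<subseteq> {\<Gamma>. mcs_in \<Phi> \<Gamma>}" and \<Delta>: "mcs_in \<Phi> \<Delta>"
    and consistent: "consistent (insert (big_disj (big_conj ` X)) \<Delta>)"
  shows "\<Delta> \<in> X"
proof (rule ccontr)
  assume "\<Delta> \<notin> X"
  have "derives \<Delta> (FNeg (big_conj \<Gamma>))" if "\<Gamma> \<in> X" for \<Gamma>
  proof -
    have \<Gamma>: "mcs_in \<Phi> \<Gamma>" "finite \<Gamma>" using X that finite_mcs by auto
    have "\<not> consistent (\<Gamma> \<union> \<Delta>)"
      using mcs_in_eq_if_consistent_Un[OF \<Gamma>(1) \<Delta>] that \<open>\<Delta> \<notin> X\<close> by blast
    moreover have "derives (insert (big_conj \<Gamma>) \<Delta>) \<psi>" if "\<psi> \<in> \<Gamma> \<union> \<Delta>" for \<psi>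
      using that derives_big_conj_iff[OF \<Gamma>(2)] derives_assm by blast
    ultimately have "\<not> consistent (insert (big_conj \<Gamma>) \<Delta>)"
      unfolding consistent_def by (blast intro: derives_cut)
    then show ?thesis by (simp add: consistent_insert_iff)
  qed
  moreover have "finite X" using X finite_mcs_set finite_subset by blast
  ultimately have "derives \<Delta> (big_conj (FNeg ` big_conj ` X))"
    by (simp add: derives_big_conj_iff)
  then show False
    using consistent inconsistentI derives_assm derives_mono
    unfolding big_disj_def by (metis insertI1 subset_insertI)
qed

lemma AIL_big_disj_invariant:
  assumes X: "X \<subseteq> {\<Gamma>. mcs_in \<Phi> \<Gamma>}"
    and closed: "\<And>\<Gamma> \<Delta>. \<Gamma> \<in> X \<Longrightarrow> (\<Gamma>, \<Delta>) \<in> canon_rel \<Phi> (FSim i) O canon_rel \<Phi> (FI i) \<Longrightarrow> \<Delta> \<in> X"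
  shows "AIL (FImp (big_disj (big_conj ` X)) (FSim i (FI i (big_disj (big_conj ` X)))))"
proof (rule ccontr)
  define \<chi> where "\<chi> = big_disj (big_conj ` X)"
  assume "\<not> AIL (FImp (big_disj (big_conj ` X)) (FSim i (FI i (big_disj (big_conj ` X)))))"
  then have "\<not> derives {\<chi>} (FSim i (FI i \<chi>))"
    unfolding \<chi>_def by (blast dest: derives_deduction AIL_if_derives_empty)
  then have "consistent (insert (FNeg (FSim i (FI i \<chi>))) {\<chi>})"
    by (simp add: consistent_insert_FNeg_iff)
  then obtain \<Delta> where \<Delta>: "mcs_in \<Phi> \<Delta>" "consistent ({FNeg (FSim i (FI i \<chi>)), \<chi>} \<union> \<Delta>)"
    using Lindenbaum by blast
  have "\<Delta> \<in> X"
    using \<Delta> consistent_mono[OF \<Delta>(2), of "insert \<chi> \<Delta>"]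
    by (auto intro: mem_if_consistent_big_disj[OF X] simp: \<chi>_def)
  have "\<not> derives \<Delta> (FSim i (FI i \<chi>))"
    using consistent_mono[OF \<Delta>(2), of "insert (FNeg (FSim i (FI i \<chi>))) \<Delta>"]
    by (auto simp: consistent_insert_FNeg_iff)
  then obtain \<Theta> where \<Theta>: "(\<Delta>, \<Theta>) \<in> canon_rel \<Phi> (FSim i)" "\<not> derives \<Theta> (FI i \<chi>)"
    using canon_rel_witness[of "FSim i" i] \<Delta>(1) by blast
  then obtain \<Lambda> where \<Lambda>: "(\<Theta>, \<Lambda>) \<in> canon_rel \<Phi> (FI i)" "\<not> derives \<Lambda> \<chi>"
    using canon_rel_witness[of "FI i" i \<Theta> \<chi>] by (auto simp: canon_rel_def)
  have "\<Lambda> \<in> X" using closed[OF \<open>\<Delta> \<in> X\<close>] \<Theta>(1) \<Lambda>(1) by blast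
  with \<Lambda>(2) show False unfolding \<chi>_def using derives_big_disj_big_conj[OF X] by blast
qed

lemma FCirc_mem_step:
  assumes "mcs_in \<Phi> \<Gamma>" and "FCirc i \<phi> \<in> \<Gamma>" and "FSim i (FI i (FCirc i \<phi>)) \<in> \<Phi>"
    and "(\<Gamma>, \<Delta>) \<in> canon_rel \<Phi> (FSim i) O canon_rel \<Phi> (FI i)"
  shows "FCirc i \<phi> \<in> \<Delta>"
proof -
  have "FSim i (FI i (FCirc i \<phi>)) \<in> \<Gamma>"
    using derives_Circ_mix(2)[OF assms(2)] mcs_in_mem_iff_derives[OF assms(1,3)] by blast
  with assms(4) show ?thesis by (auto simp: canon_rel_def)
qed

lemma FCirc_mem_trancl:
  assumes \<Gamma>: "mcs_in \<Phi> \<Gamma>" and "FCirc i \<phi> \<in> \<Gamma>" and mix: "FSim i (FI i (FCirc i \<phi>)) \<in> \<Phi>"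
    and "(\<Gamma>, \<Delta>) \<in> (canon_rel \<Phi> (FSim i) O canon_rel \<Phi> (FI i))\<^sup>+"
  shows "FCirc i \<phi> \<in> \<Delta>"
  using assms(4)
proof (induction rule: trancl_induct)
  case (base \<Delta>)
  then show ?case by (rule FCirc_mem_step[OF \<Gamma> assms(2) mix])
next
  case (step \<Delta> \<Lambda>)
  then show ?case using FCirc_mem_step[OF mcs_in_if_trancl_canon_rel[OF step(1)] _ mix] by blast
qed

lemma FCirc_mem_if_all_trancl:
  assumes \<Gamma>: "mcs_in \<Phi> \<Gamma>" and "FCirc i \<phi> \<in> \<Phi>"
    and all: "\<forall>\<Delta>. (\<Gamma>, \<Delta>) \<in> (canon_rel \<Phi> (FSim i) O canon_rel \<Phi> (FI i))\<^sup>+ \<longrightarrow> \<phi> \<in> \<Delta>"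
  shows "FCirc i \<phi> \<in> \<Gamma>"
proof -
  define X where "X = (canon_rel \<Phi> (FSim i) O canon_rel \<Phi> (FI i))\<^sup>+ `` {\<Gamma>}"
  define \<chi> where "\<chi> = big_disj (big_conj ` X)"
  have X: "X \<subseteq> {\<Gamma>. mcs_in \<Phi> \<Gamma>}"
    unfolding X_def by (auto intro: mcs_in_if_trancl_canon_rel)
  have "\<Gamma> \<in> X"
    using canon_rel_refl[OF _ \<Gamma>, of "FSim i" i] canon_rel_refl[OF _ \<Gamma>, of "FI i" i]
    unfolding X_def by blast
  have "AIL (FImp \<chi> \<phi>)"
    using X all finite_mcs finite_subset[OF X finite_mcs_set]
    unfolding \<chi>_def X_def
    by (intro AIL_taut_consequence[of "[]"]) (auto simp: peval_big_disj peval_big_conj)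
  have "AIL (FImp \<chi> (FSim i (FI i \<chi>)))"
    unfolding \<chi>_def using X by (intro AIL_big_disj_invariant) (auto simp: X_def)
  then have "AIL (FImp \<chi> (FCirc i \<chi>))"
    by (rule AIL.MP[OF AIL.Circ_ind AIL.Nec_Circ])
  moreover have "AIL (FImp (FCirc i \<chi>) (FCirc i \<phi>))"
    using \<open>AIL (FImp \<chi> \<phi>)\<close> by (rule AIL.MP[OF AIL.K_circ AIL.Nec_Circ])
  moreover have "derives \<Gamma> \<chi>"
    unfolding \<chi>_def using X \<open>\<Gamma> \<in> X\<close> by (rule derives_big_disj_big_conj)
  ultimately have "derives \<Gamma> (FCirc i \<phi>)" by (blast intro: derives_AIL_imp)
  then show ?thesis using mcs_in_mem_iff_derives[OF \<Gamma> assms(2)] by blast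
qed

lemma mcs_in_FCirc_iff:
  assumes \<Gamma>: "mcs_in \<Phi> \<Gamma>" and "FCirc i \<phi> \<in> \<Phi>" and "FSim i (FI i (FCirc i \<phi>)) \<in> \<Phi>"
  shows "FCirc i \<phi> \<in> \<Gamma> \<longleftrightarrow>
    (\<forall>\<Delta>. (\<Gamma>, \<Delta>) \<in> (canon_rel \<Phi> (FSim i) O canon_rel \<Phi> (FI i))\<^sup>+ \<longrightarrow> \<phi> \<in> \<Delta>)"
proof
  have "\<phi> \<in> \<Phi>" using assms(2) subs_mem by auto
  assume "FCirc i \<phi> \<in> \<Gamma>"
  show "\<forall>\<Delta>. (\<Gamma>, \<Delta>) \<in> (canon_rel \<Phi> (FSim i) O canon_rel \<Phi> (FI i))\<^sup>+ \<longrightarrow> \<phi> \<in> \<Delta>"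
  proof (intro allI impI)
    fix \<Delta> assume "(\<Gamma>, \<Delta>) \<in> (canon_rel \<Phi> (FSim i) O canon_rel \<Phi> (FI i))\<^sup>+"
    then have \<Delta>: "mcs_in \<Phi> \<Delta>" "FCirc i \<phi> \<in> \<Delta>"
      by (rule mcs_in_if_trancl_canon_rel, rule FCirc_mem_trancl[OF \<Gamma> \<open>FCirc i \<phi> \<in> \<Gamma>\<close> assms(3)])
    show "\<phi> \<in> \<Delta>"
      using derives_Circ_mix(1)[OF \<Delta>(2)] mcs_in_mem_iff_derives[OF \<Delta>(1) \<open>\<phi> \<in> \<Phi>\<close>] by blast
  qed
qed (rule FCirc_mem_if_all_trancl[OF \<Gamma> assms(2)])

end

lemma finite_closure_set_cl: "finite_closure_set (cl (\<phi>0 :: ('a, 'g::finite) fm))"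
  by unfold_locales (auto intro: finite_cl negate_mem_cl cl.sub)

theorem lemma12:
  fixes \<phi>0 \<phi> :: "('a::countable, 'g::finite) fm"
    and w :: "('a, 'g) fm set"
  assumes "w \<in> mW (canon (cl \<phi>0))"
    and "\<phi> \<in> cl \<phi>0"
  shows "sat (canon (cl \<phi>0)) w \<phi> \<longleftrightarrow> \<phi> \<in> w"
proof -
  interpret finite_closure_set "cl \<phi>0" by (rule finite_closure_set_cl)
  show ?thesis
    using assms
  proof (induction \<phi> arbitrary: w)
    case (FAtom p)
    then show ?case by (simp add: canon_simps)
  next
    case (FNeg \<phi>)
    then show ?case using cl.sub[OF FNeg.prems(2)] by (simp add: canon_simps mcs_in_FNeg_iff)
  next
    case (FConj \<phi> \<psi>)
    then show ?case using cl.sub[OF FConj.prems(2)] by (simp add: canon_simps mcs_in_FConj_iff)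
  next
    case (FA i \<phi>)
    then show ?case by (simp add: canon_simps mcs_in_FA_iff cl.A_sub[OF _ FAtom_mem_subs])
  next
    case (FI i \<phi>)
    then show ?case
      using cl.sub[OF FI.prems(2)] by (auto simp: canon_simps mcs_in_box_iff[of "FI i" i] canon_rel_def)
  next
    case (FSim i \<phi>)
    then show ?case
      using cl.sub[OF FSim.prems(2)] by (auto simp: canon_simps mcs_in_box_iff[of "FSim i" i] canon_rel_def)
  next
    case (FCirc i \<phi>)
    then show ?case
      using cl.sub[OF FCirc.prems(2)] cl.Circ_SIC[OF FCirc.prems(2)]
      by (auto simp: canon_simps mcs_in_FCirc_iff dest: mcs_in_if_trancl_canon_rel)
  next
    case (FE i \<phi>)
    then have "\<phi> \<in> cl \<phi>0" "FA i \<phi> \<in> cl \<phi>0" "FCirc i \<phi> \<in> cl \<phi>0"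
      by (auto intro: cl.sub cl.E_A cl.E_Circ)
    with FE show ?case
      by (auto simp: canon_simps mcs_in_FE_iff mcs_in_FA_iff cl.A_sub[OF _ FAtom_mem_subs]
          mcs_in_FCirc_iff cl.Circ_SIC dest: mcs_in_if_trancl_canon_rel)
  qed
qed

end
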